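(* Consider an execution of the MBA protocol (described in the context) with $n\ge 3t+1$ players of which at most $t$ are malicious. If, for some component $c\in\{1,\dots,m\}$, the honest players obtain $b_c=0$ in the common bit vector $\mathbf b$ output by STEP 3, then the honest players reach $c$-agreement on a value $v\neq\bot$ in the $c$-th component of their MBA outputs.
   Context: Network model: $n$ players; every pair joined by a direct private channel; synchronous steps, instantaneous delivery; at most $t$ malicious players, honest players follow the protocol and send the same message to everyone. $\#_i^s(v,c)$ is the number of distinct players from which $i$ received in step $s$ a valid vector message whose $c$-th component is $v$ (counting its own; conflicting messages from one sender discarded, duplicates once). $c$-agreement on outputs: all honest players have the same $c$-th output component. MGC (two steps): STEP 1: each $i$ sends its initial vector $\mathbf{v}_i'\in(V\cup\{\bot\})^m$. STEP 2: each $i$ sends $\tilde{\mathbf v}_i$ with $\tilde v_{i,c}=v$ if $\#_i^1(v,c)\ge\lfloor\frac{2n}3\rfloor+1$, else $\bot$. Output: $(v_{i,c},g_{i,c})=(x,2)$ if $\#_i^2(x,c)\ge\lfloor\frac{2n}3\rfloor+1$ for some $x\ne\bot$; else $(x,1)$ if $\#_i^2(x,c)\ge\lfloor\frac n3\rfloor+1$ for some $x\ne\bot$; else $(\bot,0)$. MBBA (on bit vectors $\mathbf b_i\in\{0,1\}^m$; $\mathbf f_i$ initially zero; $H$ a random oracle, $\mathrm{SIG}_i$ unique signatures, $r$ common random string, counter $\gamma=0$): EXIT CHECK: if $\mathbf f_i$ is all ones, send $\mathbf b_i$ as final (reused by receivers in later steps), output $\mathbf b_i$, halt. STEP 1: send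 $\mathbf b_i$; for $c$ with $f_{i,c}=0$: if $\#_i^1(0,c)>\frac23n$ set $b_{i,c}=0,f_{i,c}=1$ and EXIT CHECK; else if $\#_i^1(1,c)>\frac23n$ set $b_{i,c}=1$; else $0$. STEP 2: send $\mathbf b_i$; for $c$ with $f_{i,c}=0$: if $\#_i^2(1,c)>\frac23n$ set $b_{i,c}=1,f_{i,c}=1$ and EXIT CHECK; else if $\#_i^2(0,c)>\frac23n$ set $0$; else $1$. STEP 3: send $\mathrm{SIG}_i(r\|\gamma)$ and $\mathbf b_i$; for $c$ with $f_{i,c}=0$: if $\#_i^3(0,c)>\frac23n$ set 0; else if $\#_i^3(1,c)>\frac23n$ set 1; else set $b_{i,c}$ to the $c$-th bit of $H(\min_{j\in P_i}H(\mathrm{SIG}_j(r\|\gamma)))$, $P_i$ the senders of valid STEP 3 messages to $i$; $\gamma\leftarrow\gamma+1$, go to STEP 1. MBA: each player $i$ has initial vector $\mathbf v_i'\in(V\cup\{\bot\})^m$. STEPS 1–2: run the two steps of MGC, obtaining $(\mathbf v_i,\mathbf g_i)$. STEP 3: run MBBA with initial bits $b_{i,c}=0$ if $g_{i,c}=2$ and $b_{i,c}=1$ otherwise; its output $\mathbf b$ is the output of STEP 3. OUTPUT: $o_{i,c}=v_{i,c}$ if $b_{c}=0$ and $o_{i,c}=\bot$ if $b_{c}=1$. *)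

theory Defs
  imports Main "HOL.Real"
begin

text \<open>Players have type 'p; the set of all players is P (n = card P), the honest
  players form Hon.  Vectors are functions nat => _, components are c < m.
  The value bottom is None.  Bits are bool (False = 0, True = 1).
  A received message of sender j (in a given step, at a given receiver) is
  an option: None = nothing valid received (nothing sent, or conflicting
  messages discarded); Some x = the unique valid message x.\<close>

definition cnt :: "'p set \<Rightarrow> ('p \<Rightarrow> (nat \<Rightarrow> 'a) option) \<Rightarrow> 'a \<Rightarrow> nat \<Rightarrow> nat" where
  "cnt P recv v c = card {j \<in> P. \<exists>x. recv j = Some x \<and> x c = v}"

text \<open>MGC STEP 2 vector component of a player, from its STEP 1 receptions.\<close>
definition mgc_tilde :: "'p set \<Rightarrow> ('p \<Rightarrow> (nat \<Rightarrow> 'v option) option) \<Rightarrow> nat \<Rightarrow> 'v option" where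
  "mgc_tilde P recv c =
     (if \<exists>v. cnt P recv v c \<ge> 2 * card P div 3 + 1
      then (SOME v. cnt P recv v c \<ge> 2 * card P div 3 + 1) else None)"

text \<open>MGC output rule for component c (relational, since the value x with grade 1
  need not be unique a priori).\<close>
definition mgc_out_ok :: "'p set \<Rightarrow> ('p \<Rightarrow> (nat \<Rightarrow> 'v option) option) \<Rightarrow> nat \<Rightarrow> 'v option \<Rightarrow> nat \<Rightarrow> bool" where
  "mgc_out_ok P recv c x g =
     (if \<exists>y. y \<noteq> None \<and> cnt P recv y c \<ge> 2 * card P div 3 + 1
      then g = 2 \<and> x \<noteq> None \<and> cnt P recv x c \<ge> 2 * card P div 3 + 1
      else if \<exists>y. y \<noteq> None \<and> cnt P recv y c \<ge> card P div 3 + 1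
      then g = 1 \<and> x \<noteq> None \<and> cnt P recv x c \<ge> card P div 3 + 1
      else x = None \<and> g = 0)"

text \<open>One MBBA step (global step number k; k mod 3 = 0,1,2 is STEP 1,2,3) of a
  non-halted honest player with vectors b, f; N v c is the count #(v,c) received
  in this step; coin c is the coin bit used in STEP 3 for component c.\<close>
definition mbba_update :: "nat \<Rightarrow> nat \<Rightarrow> nat \<Rightarrow> (bool \<Rightarrow> nat \<Rightarrow> nat) \<Rightarrow> (nat \<Rightarrow> bool)
    \<Rightarrow> (nat \<Rightarrow> bool) \<Rightarrow> (nat \<Rightarrow> bool) \<Rightarrow> (nat \<Rightarrow> bool) \<times> (nat \<Rightarrow> bool)" where
  "mbba_update k n m N coin b f =
    (let big = (\<lambda>v c. real (N v c) > 2 / 3 * real n) in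
     if k mod 3 = 0 then
       ((\<lambda>c. if c < m \<and> \<not> f c then (if big False c then False else if big True c then True else False) else b c),
        (\<lambda>c. f c \<or> (c < m \<and> big False c)))
     else if k mod 3 = 1 then
       ((\<lambda>c. if c < m \<and> \<not> f c then (if big True c then True else if big False c then False else True) else b c),
        (\<lambda>c. f c \<or> (c < m \<and> big True c)))
     else
       ((\<lambda>c. if c < m \<and> \<not> f c then (if big False c then False else if big True c then True else coin c) else b c),
        f))"

text \<open>An execution of MBA.
  vinit j: initial vector; M1 j i, M2 j i: what i validly received from j in MGC
  steps 1, 2; vout i, gout i: MGC outputs; M k j i: what i validly received from j
  in MBBA step k; B k i, F k i, Hlt k i: bit vector, flag vector and halted status
  of player i before MBBA step k; coin k i c: the STEP 3 coin bit of i in step k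
  (left arbitrary).  Malicious players' messages are unconstrained.
  A halted player keeps sending its final vector (receivers reuse it).\<close>
definition mba_execution ::
  "'p set \<Rightarrow> 'p set \<Rightarrow> nat \<Rightarrow> nat \<Rightarrow> ('p \<Rightarrow> nat \<Rightarrow> 'v option)
   \<Rightarrow> ('p \<Rightarrow> 'p \<Rightarrow> (nat \<Rightarrow> 'v option) option) \<Rightarrow> ('p \<Rightarrow> 'p \<Rightarrow> (nat \<Rightarrow> 'v option) option)
   \<Rightarrow> ('p \<Rightarrow> nat \<Rightarrow> 'v option) \<Rightarrow> ('p \<Rightarrow> nat \<Rightarrow> nat)
   \<Rightarrow> (nat \<Rightarrow> 'p \<Rightarrow> 'p \<Rightarrow> (nat \<Rightarrow> bool) option) \<Rightarrow> (nat \<Rightarrow> 'p \<Rightarrow> nat \<Rightarrow> bool)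
   \<Rightarrow> (nat \<Rightarrow> 'p \<Rightarrow> nat \<Rightarrow> bool) \<Rightarrow> (nat \<Rightarrow> 'p \<Rightarrow> nat \<Rightarrow> bool) \<Rightarrow> (nat \<Rightarrow> 'p \<Rightarrow> bool) \<Rightarrow> bool" where
  "mba_execution P Hon t m vinit M1 M2 vout gout M coin B F Hlt \<longleftrightarrow>
     finite P \<and> Hon \<subseteq> P \<and> card (P - Hon) \<le> t \<and>
     (\<forall>j\<in>Hon. \<forall>i\<in>P. M1 j i = Some (vinit j)) \<and>
     (\<forall>j\<in>Hon. \<forall>i\<in>P. M2 j i = Some (mgc_tilde P (\<lambda>j'. M1 j' j))) \<and>
     (\<forall>i\<in>Hon. \<forall>c. mgc_out_ok P (\<lambda>j. M2 j i) c (vout i c) (gout i c)) \<and>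
     (\<forall>i\<in>Hon. B 0 i = (\<lambda>c. gout i c \<noteq> 2) \<and> F 0 i = (\<lambda>c. False) \<and> \<not> Hlt 0 i) \<and>
     (\<forall>k. \<forall>j\<in>Hon. \<forall>i\<in>P. M k j i = Some (B k j)) \<and>
     (\<forall>k. \<forall>i\<in>Hon.
        (if Hlt k i
         then B (Suc k) i = B k i \<and> F (Suc k) i = F k i \<and> Hlt (Suc k) i
         else (B (Suc k) i, F (Suc k) i) =
                mbba_update k (card P) m (\<lambda>v c. cnt P (\<lambda>j. M k j i) v c) (coin k i) (B k i) (F k i)
              \<and> Hlt (Suc k) i = (k mod 3 \<noteq> 2 \<and> (\<forall>c<m. F (Suc k) i c))))"

end

theory Submission
  imports Defs
begin

text \<open>If the common bit of component c is 0, some honest player must have entered MBBA with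
  bit 0: by validity of MBBA, a bit 1 shared by all honest players can never be flipped, since
  at most t < n/3 senders can vote 0.  Bit 0 at an honest player means MGC grade 2, i.e. it
  received a value x from more than 2n/3 players in MGC step 2, hence from more than n/3
  honest ones.  Honest step-2 values agree, since two quorums of more than 2n/3 step-1
  messages share an honest sender.  So every honest player receives x more than n/3 > t times
  and any other value at most t times, and its MGC output is x.\<close>

lemma card_filter_le_honest_plus:
  assumes "finite P" "Hon \<subseteq> P" "card (P - Hon) \<le> t"
  shows "card {j\<in>P. Q j} \<le> card {j\<in>Hon. Q j} + t"
proof -
  have "{j\<in>P. Q j} \<subseteq> {j\<in>Hon. Q j} \<union> (P - Hon)" using assms by auto
  then have "card {j\<in>P. Q j} \<le> card ({j\<in>Hon. Q j} \<union> (P - Hon))"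
    using assms by (intro card_mono) (auto intro: finite_subset)
  also have "\<dots> \<le> card {j\<in>Hon. Q j} + card (P - Hon)" by (rule card_Un_le)
  finally show ?thesis using assms(3) by linarith
qed

lemma card_filter_honest_le:
  assumes "finite P" "Hon \<subseteq> P"
  shows "card {j\<in>Hon. Q j} \<le> card {j\<in>P. Q j}"
  using assms by (intro card_mono) auto

lemma card_Int_gt_if_two_thirds:
  assumes "finite P" "A \<subseteq> P" "B \<subseteq> P" "card P \<ge> 3 * t + 1"
    and "card A \<ge> 2 * card P div 3 + 1" "card B \<ge> 2 * card P div 3 + 1"
  shows "card (A \<inter> B) > t"
proof -
  have "finite A" "finite B" using assms(1-3) finite_subset by auto
  then have "card A + card B = card (A \<union> B) + card (A \<inter> B)" by (rule card_Un_Int)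
  moreover have "card (A \<union> B) \<le> card P" using assms(1-3) by (intro card_mono) auto
  ultimately show ?thesis using assms(4-6) by linarith
qed

lemma mgc_tilde_cnt:
  assumes "mgc_tilde P recv c \<noteq> None"
  shows "cnt P recv (mgc_tilde P recv c) c \<ge> 2 * card P div 3 + 1"
  using assms unfolding mgc_tilde_def by (auto split: if_splits intro: someI_ex)

lemma mgc_out_ok_unique_value:
  assumes "mgc_out_ok P recv c v g" "x \<noteq> None" "t \<le> card P div 3"
    and "cnt P recv x c \<ge> card P div 3 + 1"
    and "\<And>y. y \<noteq> None \<Longrightarrow> y \<noteq> x \<Longrightarrow> cnt P recv y c \<le> t"
  shows "v = x"
proof -
  have "v \<noteq> None" "cnt P recv v c > t"
    using assms(1-4) unfolding mgc_out_ok_def by (auto split: if_splits)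
  then show ?thesis using assms(5) by (meson not_le)
qed

lemma mbba_update_keeps_supported_one:
  assumes "b c" "\<not> real (N False c) > 2 / 3 * real n" "real (N True c) > 2 / 3 * real n"
  shows "fst (mbba_update k n m N coin b f) c"
  using assms unfolding mbba_update_def Let_def by auto

locale mba_run =
  fixes P Hon :: "'p set" and t m :: nat
    and vinit :: "'p \<Rightarrow> nat \<Rightarrow> 'v option"
    and M1 M2 :: "'p \<Rightarrow> 'p \<Rightarrow> (nat \<Rightarrow> 'v option) option"
    and vout :: "'p \<Rightarrow> nat \<Rightarrow> 'v option" and gout :: "'p \<Rightarrow> nat \<Rightarrow> nat"
    and M :: "nat \<Rightarrow> 'p \<Rightarrow> 'p \<Rightarrow> (nat \<Rightarrow> bool) option"
    and coin B F :: "nat \<Rightarrow> 'p \<Rightarrow> nat \<Rightarrow> bool" and Hlt :: "nat \<Rightarrow> 'p \<Rightarrow> bool"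
  assumes exec: "mba_execution P Hon t m vinit M1 M2 vout gout M coin B F Hlt"
    and resilient: "card P \<ge> 3 * t + 1"
begin

lemma finite_players: "finite P"
  and honest_subset: "Hon \<subseteq> P"
  and card_faulty: "card (P - Hon) \<le> t"
  using exec unfolding mba_execution_def by auto

lemmas card_filter_le_honest = card_filter_le_honest_plus[OF finite_players honest_subset card_faulty]
lemmas card_honest_le_filter = card_filter_honest_le[OF finite_players honest_subset]

lemma faulty_le_third: "t \<le> card P div 3"
  using resilient by linarith

lemma honest_step:
  assumes "i \<in> Hon"
  shows "if Hlt k i
         then B (Suc k) i = B k i \<and> F (Suc k) i = F k i \<and> Hlt (Suc k) i
         else (B (Suc k) i, F (Suc k) i) =
                mbba_update k (card P) m (\<lambda>v c. cnt P (\<lambda>j. M k j i) v c) (coin k i) (B k i) (F k i)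
              \<and> Hlt (Suc k) i = (k mod 3 \<noteq> 2 \<and> (\<forall>c<m. F (Suc k) i c))"
  using exec assms unfolding mba_execution_def by blast

lemma halted_stays:
  assumes "i \<in> Hon" "Hlt k i"
  shows "Hlt (k + d) i \<and> B (k + d) i = B k i"
  using honest_step[OF assms(1)] assms(2) by (induction d) auto

lemma halted_bits_eq:
  assumes "i \<in> Hon" "Hlt k i" "Hlt k' i"
  shows "B k i = B k' i"
  using halted_stays[OF assms(1,2), of k'] halted_stays[OF assms(1,3), of k]
  by (simp add: add.commute)

lemma unanimous_one_persists:
  assumes "\<forall>i\<in>Hon. B 0 i c"
  shows "\<forall>i\<in>Hon. B k i c"
proof (induction k)
  case 0
  show ?case using assms .
next
  case (Suc k)
  have received: "M k j i = Some (B k j)" if "j \<in> Hon" "i \<in> P" for i j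
    using exec that unfolding mba_execution_def by blast
  show ?case
  proof
    fix i assume i: "i \<in> Hon"
    then have iP: "i \<in> P" using honest_subset by auto
    define N where "N = (\<lambda>v c. cnt P (\<lambda>j. M k j i) v c)"
    have no_zero: "{j\<in>Hon. \<exists>x. M k j i = Some x \<and> x c = False} = {}"
      and all_one: "{j\<in>Hon. \<exists>x. M k j i = Some x \<and> x c = True} = Hon"
      using received[OF _ iP] Suc.IH by auto
    have "N False c \<le> t" "N True c \<ge> card Hon"
      using card_filter_le_honest[of "\<lambda>j. \<exists>x. M k j i = Some x \<and> x c = False", unfolded no_zero]
        card_honest_le_filter[of "\<lambda>j. \<exists>x. M k j i = Some x \<and> x c = True", unfolded all_one]
      unfolding N_def cnt_def by simp_all
    moreover have "card P \<le> card Hon + t"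
      using card_filter_le_honest[of "\<lambda>_. True"] by simp
    ultimately have "\<not> real (N False c) > 2 / 3 * real (card P)"
      and "real (N True c) > 2 / 3 * real (card P)"
      using resilient by linarith+
    then show "B (Suc k) i c"
      using honest_step[OF i, of k] Suc.IH i mbba_update_keeps_supported_one
      unfolding N_def by (cases "Hlt k i") (auto simp: prod_eq_iff)
  qed
qed

lemma grade_two_if_zero_bit:
  assumes "i \<in> Hon" "\<not> B k i c"
  obtains j where "j \<in> Hon" "gout j c = 2"
proof -
  obtain j where "j \<in> Hon" "\<not> B 0 j c"
    using unanimous_one_persists[of c k] assms by blast
  moreover have "B 0 j = (\<lambda>c. gout j c \<noteq> 2)"
    using exec \<open>j \<in> Hon\<close> unfolding mba_execution_def by blast
  ultimately show thesis using that by simp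
qed

definition mgc_sent :: "'p \<Rightarrow> nat \<Rightarrow> 'v option" where
  "mgc_sent j c = mgc_tilde P (\<lambda>j'. M1 j' j) c"

lemma honest_senders_step2:
  assumes "i \<in> P"
  shows "{j\<in>Hon. \<exists>x. M2 j i = Some x \<and> x c = y} = {j\<in>Hon. mgc_sent j c = y}"
  using exec assms unfolding mba_execution_def mgc_sent_def by auto

lemma mgc_sent_consistent:
  assumes "j1 \<in> Hon" "j2 \<in> Hon" "mgc_sent j1 c \<noteq> None" "mgc_sent j2 c \<noteq> None"
  shows "mgc_sent j1 c = mgc_sent j2 c"
proof (rule ccontr)
  assume ne: "mgc_sent j1 c \<noteq> mgc_sent j2 c"
  define S where "S = (\<lambda>i. {x\<in>P. \<exists>y. M1 x i = Some y \<and> y c = mgc_sent i c})"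
  have "card (S j1) \<ge> 2 * card P div 3 + 1" "card (S j2) \<ge> 2 * card P div 3 + 1"
    using mgc_tilde_cnt[of P "\<lambda>j. M1 j j1" c] mgc_tilde_cnt[of P "\<lambda>j. M1 j j2" c] assms(3,4)
    unfolding S_def mgc_sent_def cnt_def by auto
  then have "card (S j1 \<inter> S j2) > t"
    using card_Int_gt_if_two_thirds[OF finite_players _ _ resilient] unfolding S_def by auto
  moreover have "S j1 \<inter> S j2 \<subseteq> P - Hon"
  proof
    fix x assume x: "x \<in> S j1 \<inter> S j2"
    have "j1 \<in> P" "j2 \<in> P" using assms(1,2) honest_subset by auto
    then have "x \<in> Hon \<Longrightarrow> M1 x j1 = M1 x j2"
      using exec unfolding mba_execution_def by simp
    then show "x \<in> P - Hon" using x ne unfolding S_def by auto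
  qed
  then have "card (S j1 \<inter> S j2) \<le> t"
    using card_faulty finite_players by (meson card_mono finite_Diff le_trans)
  ultimately show False by simp
qed

lemma grade_two_value_everywhere:
  assumes j0: "j0 \<in> Hon" "gout j0 c = 2" and i: "i \<in> Hon"
  shows "vout i c = vout j0 c \<and> vout j0 c \<noteq> None"
proof -
  define x where "x = vout j0 c"
  have out_ok: "mgc_out_ok P (\<lambda>j. M2 j i) c (vout i c) (gout i c)" if "i \<in> Hon" for i
    using exec that unfolding mba_execution_def by blast
  have "x \<noteq> None" and "cnt P (\<lambda>j. M2 j j0) x c \<ge> 2 * card P div 3 + 1"
    using out_ok[OF j0(1)] j0(2) unfolding x_def mgc_out_ok_def by (auto split: if_splits)
  then have "card {j\<in>Hon. mgc_sent j c = x} + t \<ge> 2 * card P div 3 + 1"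
    using card_filter_le_honest[of "\<lambda>j. \<exists>z. M2 j j0 = Some z \<and> z c = x"]
      honest_senders_step2 j0(1) honest_subset unfolding cnt_def by fastforce
  then have many_x: "card {j\<in>Hon. mgc_sent j c = x} \<ge> card P div 3 + 1"
    using faulty_le_third by linarith
  then obtain j1 where j1: "j1 \<in> Hon" "mgc_sent j1 c = x"
    by (metis (mono_tags, lifting) Collect_empty_eq card.empty not_one_le_zero add_is_0 le_zero_eq)
  have iP: "i \<in> P" using i honest_subset by auto
  have "cnt P (\<lambda>j. M2 j i) x c \<ge> card P div 3 + 1"
    using many_x card_honest_le_filter[of "\<lambda>j. \<exists>z. M2 j i = Some z \<and> z c = x"]
      honest_senders_step2[OF iP] unfolding cnt_def by simp
  moreover have "cnt P (\<lambda>j. M2 j i) y c \<le> t" if "y \<noteq> None" "y \<noteq> x" for y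
  proof -
    have none_y: "{j\<in>Hon. mgc_sent j c = y} = {}"
      using mgc_sent_consistent[OF _ j1(1)] j1(2) \<open>x \<noteq> None\<close> that by fastforce
    show ?thesis
      using card_filter_le_honest[of "\<lambda>j. \<exists>z. M2 j i = Some z \<and> z c = y"]
      unfolding cnt_def honest_senders_step2[OF iP] none_y by simp
  qed
  ultimately have "vout i c = x"
    using mgc_out_ok_unique_value[OF out_ok[OF i] \<open>x \<noteq> None\<close> faulty_le_third] by blast
  then show ?thesis using \<open>x \<noteq> None\<close> x_def by simp
qed

end

theorem lemma4:
  fixes P Hon :: "'p set" and t m c :: nat
  assumes exec: "mba_execution P Hon t m vinit M1 M2 vout gout M coin B F Hlt"
    and n_ge: "card P \<ge> 3 * t + 1"
    and c_lt: "c < m"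
    and b0: "\<forall>i\<in>Hon. \<exists>k. Hlt k i \<and> \<not> B k i c"
  shows "\<exists>v. v \<noteq> None \<and>
           (\<forall>i\<in>Hon. \<forall>k. Hlt k i \<longrightarrow> (if B k i c then None else vout i c) = v)"
proof (cases "Hon = {}")
  case True
  then show ?thesis by auto
next
  case False
  interpret mba_run P Hon t m vinit M1 M2 vout gout M coin B F Hlt
    using exec n_ge by unfold_locales
  obtain i0 k0 where "i0 \<in> Hon" "\<not> B k0 i0 c" using False b0 by blast
  then obtain j0 where j0: "j0 \<in> Hon" "gout j0 c = 2" by (rule grade_two_if_zero_bit)
  have "\<not> B k i c \<and> vout i c = vout j0 c" if "i \<in> Hon" "Hlt k i" for i k
    using b0 halted_bits_eq[OF that] grade_two_value_everywhere[OF j0 that(1)] that(1) by metis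
  moreover have "vout j0 c \<noteq> None" using grade_two_value_everywhere[OF j0 j0(1)] by blast
  ultimately show ?thesis by (intro exI[of _ "vout j0 c"]) simp
qed

end
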